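(* Let $\tau:\mathcal A\to\mathcal A^+$ be a substitution satisfying the standing assumptions below, with one-sided subshift $(X_\tau,\sigma)$. Then: (i) every $y\in\tau(X_\tau)$ can be written in exactly one way as $y=\tau(x)$ with $x\in X_\tau$; (ii) every $y\in X_\tau\setminus\tau(X_\tau)$ can be written as $y=\sigma^k(\tau(x))$ with $x=x_0x_1\ldots\in X_\tau$ and $0<k<|\tau(x_0)|$, and in any such representation $\sigma(x)$ is uniquely determined by $y$ (i.e. if $y=\sigma^k(\tau(x))=\sigma^{k'}(\tau(x'))$ with $0<k<|\tau(x_0)|$ and $0<k'<|\tau(x'_0)|$, then $\sigma(x)=\sigma(x')$).
   Context: $\mathcal A$ is a finite alphabet, $\mathcal A^+$ the set of finite words over $\mathcal A$; for a word $w$, $|w|$ is its length and $w_{[i,j]}=w_i\cdots w_j$. A substitution $\tau:\mathcal A\to\mathcal A^+$ is extended to words and to one-sided sequences $x=x_0x_1\ldots\in\mathcal A^{\mathbb N}$ by concatenation, $\tau(x)=\tau(x_0)\tau(x_1)\cdots$. $\sigma$ is the left shift on $\mathcal A^{\mathbb N}$ (product of discrete topologies). A fixed point is $u\in\mathcal A^{\mathbb N}$ with $\tau(u)=u$, and $X_\tau$ is the closure of $\{\sigma^n(u):n\ge0\}$. Standing assumptions: $\tau$ is primitive (some $k$ such that every letter occurs in $\tau^k(a)$ for every $a$), $X_\tau$ is aperiodic (infinite), $\tau$ has a fixed point $u$, $\tau$ is (unilaterally) recognizable, and every power $\tau^n$ ($n\ge1$) is injective on letters. Recognizable means: with $E=\{0\}\cup\{|\tau(u_{[0,p-1]})|:p>0\}$,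 there is $L$ such that whenever $u_{[i,i+L-1]}=u_{[j,j+L-1]}$ and $i\in E$, then $j\in E$. *)

theory Defs
  imports Main
begin

definition subst_word :: "('a \<Rightarrow> 'a list) \<Rightarrow> 'a list \<Rightarrow> 'a list" where
  "subst_word \<tau> w = concat (map \<tau> w)"

definition pref :: "(nat \<Rightarrow> 'a) \<Rightarrow> nat \<Rightarrow> 'a list" where
  "pref x p = map x [0..<p]"

text \<open>Concatenation tau(x) = tau(x_0) tau(x_1) ... (for a substitution with nonempty images):
  the n-th letter lies in the block of the least p with |tau(x_[0,p])| > n.\<close>
definition subst_seq :: "('a \<Rightarrow> 'a list) \<Rightarrow> (nat \<Rightarrow> 'a) \<Rightarrow> (nat \<Rightarrow> 'a)" where
  "subst_seq \<tau> x n =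
     (let p = (LEAST p. n < length (subst_word \<tau> (pref x (Suc p)))) in
        \<tau> (x p) ! (n - length (subst_word \<tau> (pref x p))))"

definition shift :: "nat \<Rightarrow> (nat \<Rightarrow> 'a) \<Rightarrow> (nat \<Rightarrow> 'a)" where
  "shift k x = (\<lambda>n. x (n + k))"

text \<open>Closure of the orbit of u in the product of discrete topologies, unfolded via the
  cylinder-set basis: y is in the closure iff every cylinder around y meets the orbit.\<close>
definition subshift :: "(nat \<Rightarrow> 'a) \<Rightarrow> (nat \<Rightarrow> 'a) set" where
  "subshift u = {y. \<forall>N. \<exists>n. \<forall>i<N. u (n + i) = y i}"

definition primitive :: "('a \<Rightarrow> 'a list) \<Rightarrow> bool" where
  "primitive \<tau> \<longleftrightarrow> (\<exists>k. \<forall>a b. b \<in> set ((subst_word \<tau> ^^ k) [a]))"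

definition recog_set :: "('a \<Rightarrow> 'a list) \<Rightarrow> (nat \<Rightarrow> 'a) \<Rightarrow> nat set" where
  "recog_set \<tau> u = {0} \<union> {length (subst_word \<tau> (pref u p)) | p. p > 0}"

definition recognizable :: "('a \<Rightarrow> 'a list) \<Rightarrow> (nat \<Rightarrow> 'a) \<Rightarrow> bool" where
  "recognizable \<tau> u \<longleftrightarrow> (\<exists>L. \<forall>i j. (\<forall>t<L. u (i + t) = u (j + t)) \<and> i \<in> recog_set \<tau> u
        \<longrightarrow> j \<in> recog_set \<tau> u)"

end

theory Submission
  imports Defs "HOL-Library.Infinite_Set"
begin

(* Let y = \<sigma>^k(\<tau>(x)) with x \<in> X. Recognizability makes the cutting points of \<tau>(x) visible in y:
   m + k is one of them iff the window y[m, m+L) occurs in u at a cutting point of u (and then it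
   does so at every occurrence). So y determines the cut set, hence the blocks \<tau>(x_i) lying inside
   y, hence, \<tau> being injective on letters, the letters x_i (all of them if k = 0, those with
   i \<ge> 1 otherwise).
   Existence uses compactness instead: every prefix of y occurs in u = \<tau>(u), hence in some
   \<sigma>^t(\<tau>(z)) with z a shift of u and t < |\<tau>(z_0)|; for a value of t occurring infinitely
   often, a limit point of these z is the required x. *)

lemma strict_mono_le_of_range_subset:
  fixes f g :: "nat \<Rightarrow> 'a::linorder"
  assumes f: "strict_mono f" and g: "strict_mono g" and sub: "range f \<subseteq> range g"
  shows "g i \<le> f i"
proof (induction i)
  case 0
  obtain m where "f 0 = g m" using sub by blast
  then show ?case using strict_mono_less_eq[OF g, of 0 m] by simp
next
  case (Suc i)
  obtain m where m: "f (Suc i) = g m" using sub by blast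
  obtain m' where m': "f i = g m'" using sub by blast
  have "g m' < g m" using m m' strict_monoD[OF f, of i "Suc i"] by simp
  then have "m' < m" using strict_mono_less[OF g] by blast
  moreover have "i \<le> m'" using Suc.IH m' strict_mono_less_eq[OF g] by simp
  ultimately show ?case using m strict_mono_less_eq[OF g, of "Suc i" m] by simp
qed

lemma strict_mono_eq_of_range_eq:
  fixes f g :: "nat \<Rightarrow> 'a::linorder"
  assumes "strict_mono f" and "strict_mono g" and "range f = range g"
  shows "f = g"
  using strict_mono_le_of_range_subset[OF assms(1,2)] strict_mono_le_of_range_subset[OF assms(2,1)] assms(3)
  by (simp add: antisym fun_eq_iff)

(* The position at which the block \<tau>(x_p) starts in \<tau>(x); its range for x = u is the set E of
   cutting points in the definition of recognizability. *)
definition block_start :: "('a \<Rightarrow> 'a list) \<Rightarrow> (nat \<Rightarrow> 'a) \<Rightarrow> nat \<Rightarrow> nat" where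
  "block_start \<tau> x p = length (subst_word \<tau> (pref x p))"

lemma block_start_0 [simp]: "block_start \<tau> x 0 = 0"
  by (simp add: block_start_def pref_def subst_word_def)

lemma block_start_Suc: "block_start \<tau> x (Suc p) = block_start \<tau> x p + length (\<tau> (x p))"
  by (simp add: block_start_def pref_def subst_word_def)

lemma mono_block_start: "mono (block_start \<tau> x)"
  unfolding mono_iff_le_Suc by (simp add: block_start_Suc)

lemma block_start_cong: "(\<forall>i<N. x i = z i) \<Longrightarrow> p \<le> N \<Longrightarrow> block_start \<tau> x p = block_start \<tau> z p"
  by (induction p) (auto simp: block_start_Suc)

lemma block_start_add: "block_start \<tau> x (p + i) = block_start \<tau> x p + block_start \<tau> (shift p x) i"
  by (induction i) (auto simp: block_start_Suc shift_def add.commute)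

lemma recog_set_eq_range: "recog_set \<tau> u = range (block_start \<tau> u)"
  unfolding recog_set_def block_start_def[symmetric]
proof (intro equalityI subsetI)
  fix e assume "e \<in> {0} \<union> {block_start \<tau> u p |p. 0 < p}"
  then show "e \<in> range (block_start \<tau> u)"
    using block_start_0[of \<tau> u] by (auto simp del: block_start_0)
next
  fix e assume "e \<in> range (block_start \<tau> u)"
  then obtain p where "e = block_start \<tau> u p" by auto
  then show "e \<in> {0} \<union> {block_start \<tau> u p |p. 0 < p}" by (cases p) auto
qed

lemma subst_seq_block_start:
  assumes "t < length (\<tau> (x p))"
  shows "subst_seq \<tau> x (block_start \<tau> x p + t) = \<tau> (x p) ! t"
proof -
  have "(LEAST q. block_start \<tau> x p + t < block_start \<tau> x (Suc q)) = p"
  proof (rule Least_equality)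
    show "block_start \<tau> x p + t < block_start \<tau> x (Suc p)"
      using assms by (simp add: block_start_Suc)
  next
    fix q assume "block_start \<tau> x p + t < block_start \<tau> x (Suc q)"
    then show "p \<le> q"
      using monoD[OF mono_block_start[of \<tau> x], of "Suc q" p] by (cases "p \<le> q") auto
  qed
  then show ?thesis
    by (simp add: subst_seq_def block_start_def[symmetric])
qed

lemma range_shifted_block_start:
  assumes before: "\<forall>p<j. block_start \<tau> x p < k" and at: "k \<le> block_start \<tau> x j"
  shows "range (\<lambda>i. block_start \<tau> x (j + i) - k) = {m. m + k \<in> range (block_start \<tau> x)}"
proof (intro equalityI subsetI)
  fix m assume "m \<in> range (\<lambda>i. block_start \<tau> x (j + i) - k)"
  then obtain i where m: "m = block_start \<tau> x (j + i) - k" by blast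
  have "k \<le> block_start \<tau> x (j + i)"
    using at monoD[OF mono_block_start[of \<tau> x], of j "j + i"] by simp
  then show "m \<in> {m. m + k \<in> range (block_start \<tau> x)}" using m by simp
next
  fix m assume "m \<in> {m. m + k \<in> range (block_start \<tau> x)}"
  then obtain q where q: "m + k = block_start \<tau> x q" by blast
  then have "\<not> q < j" using before by fastforce
  then obtain i where "q = j + i" using le_Suc_ex not_less by blast
  then have "m = block_start \<tau> x (j + i) - k" using q by simp
  then show "m \<in> range (\<lambda>i. block_start \<tau> x (j + i) - k)" by (rule range_eqI)
qed

context
  fixes \<tau> :: "'a \<Rightarrow> 'a list"
  assumes nonempty: "\<forall>a. \<tau> a \<noteq> []"
begin

lemma strict_mono_block_start: "strict_mono (block_start \<tau> x)"
  unfolding strict_mono_Suc_iff using nonempty by (auto simp: block_start_Suc)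

lemma le_block_start: "p \<le> block_start \<tau> x p"
  using strict_mono_block_start by (rule strict_mono_imp_increasing)

lemma block_start_decomp: "\<exists>p t. n = block_start \<tau> x p + t \<and> t < length (\<tau> (x p))"
proof -
  define p where "p = (LEAST p. n < block_start \<tau> x (Suc p))"
  have "n < block_start \<tau> x (Suc n)"
    using le_block_start[of "Suc n" x] by simp
  then have upper: "n < block_start \<tau> x (Suc p)"
    unfolding p_def by (rule LeastI)
  have lower: "block_start \<tau> x p \<le> n"
  proof (cases p)
    case (Suc q)
    then show ?thesis
      using not_less_Least[of q "\<lambda>p. n < block_start \<tau> x (Suc p)"] p_def by simp
  qed simp
  show ?thesis
    using upper lower by (intro exI[of _ p] exI[of _ "n - block_start \<tau> x p"]) (auto simp: block_start_Suc)
qed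

lemma subst_seq_cong:
  assumes "\<forall>i<N. x i = z i" and "n < N"
  shows "subst_seq \<tau> x n = subst_seq \<tau> z n"
proof -
  obtain p t where n: "n = block_start \<tau> x p + t" and t: "t < length (\<tau> (x p))"
    using block_start_decomp by blast
  have "p < N"
    using le_block_start[of p x] n assms(2) by simp
  then show ?thesis
    using assms(1) block_start_cong[OF assms(1), of p \<tau>] n t subst_seq_block_start[of t \<tau> z p]
      subst_seq_block_start[of t \<tau> x p] by simp
qed

lemma subst_seq_shift: "subst_seq \<tau> (shift p x) n = subst_seq \<tau> x (block_start \<tau> x p + n)"
proof -
  obtain q t where n: "n = block_start \<tau> (shift p x) q + t" and t: "t < length (\<tau> (shift p x q))"
    using block_start_decomp by blast
  have "shift p x q = x (p + q)"
    by (simp add: shift_def add.commute)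
  then show ?thesis
    using n t block_start_add[of \<tau> x p q] subst_seq_block_start[of t \<tau> x "p + q"]
      subst_seq_block_start[of t \<tau> "shift p x" q]
    by (simp add: add.assoc)
qed

lemma block_start_shift_range_iff:
  "block_start \<tau> x p + d \<in> range (block_start \<tau> x) \<longleftrightarrow> d \<in> range (block_start \<tau> (shift p x))"
proof
  assume "block_start \<tau> x p + d \<in> range (block_start \<tau> x)"
  then obtain q where q: "block_start \<tau> x p + d = block_start \<tau> x q" by auto
  then have "p \<le> q"
    using strict_mono_less_eq[OF strict_mono_block_start] by (metis le_add1)
  then obtain i where "q = p + i" using le_Suc_ex by blast
  then show "d \<in> range (block_start \<tau> (shift p x))"
    using q block_start_add[of \<tau> x p i] by auto
next
  assume "d \<in> range (block_start \<tau> (shift p x))"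
  then obtain i where "d = block_start \<tau> (shift p x) i" by blast
  then have "block_start \<tau> x p + d = block_start \<tau> x (p + i)" by (simp add: block_start_add)
  then show "block_start \<tau> x p + d \<in> range (block_start \<tau> x)" by simp
qed

lemma block_start_range_cong:
  assumes agree: "\<forall>i<N. x i = z i" and "c \<le> N"
  shows "c \<in> range (block_start \<tau> x) \<longleftrightarrow> c \<in> range (block_start \<tau> z)"
proof
  assume "c \<in> range (block_start \<tau> x)"
  then obtain p where c: "c = block_start \<tau> x p" by blast
  then have "p \<le> N" using le_block_start[of p x] assms(2) by simp
  then show "c \<in> range (block_start \<tau> z)" using c block_start_cong[OF agree] by simp
next
  assume "c \<in> range (block_start \<tau> z)"
  then obtain p where c: "c = block_start \<tau> z p" by blast
  then have "p \<le> N" using le_block_start[of p z] assms(2) by simp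
  then show "c \<in> range (block_start \<tau> x)" using c block_start_cong[OF agree] by (metis rangeI)
qed

lemma strict_mono_shifted_block_start:
  assumes "k \<le> block_start \<tau> x j"
  shows "strict_mono (\<lambda>i. block_start \<tau> x (j + i) - k)"
proof (rule strict_monoI)
  fix i i' :: nat assume "i < i'"
  moreover have "block_start \<tau> x j \<le> block_start \<tau> x (j + i)"
    using strict_mono_less_eq[OF strict_mono_block_start[of x]] by simp
  ultimately show "block_start \<tau> x (j + i) - k < block_start \<tau> x (j + i') - k"
    using assms strict_mono_less[OF strict_mono_block_start[of x], of "j + i" "j + i'"] by simp
qed

lemma blocks_eq_of_cuts_eq:
  assumes inj: "inj \<tau>"
    and y: "shift k (subst_seq \<tau> x) = shift k' (subst_seq \<tau> x')"
    and before: "\<forall>p<j. block_start \<tau> x p < k" "\<forall>p<j. block_start \<tau> x' p < k'"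
    and at: "k \<le> block_start \<tau> x j" "k' \<le> block_start \<tau> x' j"
    and cuts: "{m. m + k \<in> range (block_start \<tau> x)} = {m. m + k' \<in> range (block_start \<tau> x')}"
  shows "x (j + i) = x' (j + i)"
proof -
  define f where "f i = block_start \<tau> x (j + i) - k" for i
  define g where "g i = block_start \<tau> x' (j + i) - k'" for i
  have "f = g"
    unfolding f_def g_def
    using strict_mono_eq_of_range_eq[OF strict_mono_shifted_block_start[OF at(1)]
        strict_mono_shifted_block_start[OF at(2)]]
      range_shifted_block_start[OF before(1) at(1)] range_shifted_block_start[OF before(2) at(2)] cuts
    by simp
  have start_x: "block_start \<tau> x (j + i) = k + f i" for i
    using at(1) monoD[OF mono_block_start[of \<tau> x], of j "j + i"] by (simp add: f_def)
  have start_x': "block_start \<tau> x' (j + i) = k' + f i" for i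
    using at(2) monoD[OF mono_block_start[of \<tau> x'], of j "j + i"] by (simp add: g_def \<open>f = g\<close>)
  have len: "length (\<tau> (x (j + i))) = length (\<tau> (x' (j + i)))"
    using block_start_Suc[of \<tau> x "j + i"] block_start_Suc[of \<tau> x' "j + i"]
      start_x[of i] start_x[of "Suc i"] start_x'[of i] start_x'[of "Suc i"] by simp
  have "\<tau> (x (j + i)) = \<tau> (x' (j + i))"
  proof (rule nth_equalityI[OF len])
    fix t assume t: "t < length (\<tau> (x (j + i)))"
    have "\<tau> (x (j + i)) ! t = subst_seq \<tau> x (f i + t + k)"
      using subst_seq_block_start[of t \<tau> x "j + i"] t start_x[of i] by (simp add: ac_simps)
    also have "\<dots> = subst_seq \<tau> x' (f i + t + k')"
      using fun_cong[OF y, of "f i + t"] by (simp add: shift_def)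
    also have "\<dots> = \<tau> (x' (j + i)) ! t"
      using subst_seq_block_start[of t \<tau> x' "j + i"] t len start_x'[of i] by (simp add: ac_simps)
    finally show "\<tau> (x (j + i)) ! t = \<tau> (x' (j + i)) ! t" .
  qed
  then show ?thesis using inj by (simp add: inj_eq)
qed

end

lemma shift_0 [simp]: "shift 0 x = x"
  by (simp add: shift_def)

lemma shift_in_subshift: "shift p u \<in> subshift u"
  unfolding subshift_def shift_def by (auto simp: add.commute)

lemma subshift_closed:
  assumes "\<forall>N. \<exists>z\<in>subshift u. \<forall>i<N. z i = x i"
  shows "x \<in> subshift u"
  unfolding subshift_def
proof (intro CollectI allI)
  fix N
  obtain z where "z \<in> subshift u" and zx: "\<forall>i<N. z i = x i" using assms by blast
  then obtain n where "\<forall>i<N. u (n + i) = z i" unfolding subshift_def by blast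
  then show "\<exists>n. \<forall>i<N. u (n + i) = x i" using zx by auto
qed

lemma finite_alphabet_limit:
  fixes z :: "nat \<Rightarrow> nat \<Rightarrow> 'a::finite"
  assumes "infinite S"
  shows "\<exists>x. \<forall>N. infinite {M\<in>S. \<forall>i<N. z M i = x i}"
proof -
  define agreeing where "agreeing w = {M\<in>S. \<forall>i<length w. z M i = w ! i}" for w
  have extend: "\<exists>a. infinite (agreeing (w @ [a]))" if inf: "infinite (agreeing w)" for w
  proof -
    obtain a where "infinite ((\<lambda>M. z M (length w)) -` {a} \<inter> agreeing w)"
      using inf_img_fin_dom'[of "\<lambda>M. z M (length w)" "agreeing w"] inf by auto
    moreover have "(\<lambda>M. z M (length w)) -` {a} \<inter> agreeing w = agreeing (w @ [a])"
      unfolding agreeing_def by (auto simp: nth_append less_Suc_eq)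
    ultimately show ?thesis by auto
  qed
  define pre where "pre = rec_nat [] (\<lambda>_ w. w @ [SOME a. infinite (agreeing (w @ [a]))])"
  have pre_Suc: "pre (Suc n) = pre n @ [SOME a. infinite (agreeing (pre n @ [a]))]" for n
    by (simp add: pre_def)
  have length_pre: "length (pre n) = n" for n
    by (induction n) (simp_all add: pre_def)
  have infinite_pre: "infinite (agreeing (pre n))" for n
  proof (induction n)
    case 0
    then show ?case using assms by (simp add: pre_def agreeing_def)
  next
    case (Suc n)
    then show ?case unfolding pre_Suc by (rule someI_ex[OF extend])
  qed
  define x where "x i = pre (Suc i) ! i" for i
  have x_pre: "i < n \<Longrightarrow> x i = pre n ! i" for i n
  proof (induction n)
    case (Suc n)
    then show ?case
      by (cases "i = n") (simp_all add: x_def pre_Suc nth_append length_pre)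
  qed simp
  have "{M\<in>S. \<forall>i<N. z M i = x i} = agreeing (pre N)" for N
    unfolding agreeing_def by (auto simp: length_pre x_pre)
  then show ?thesis using infinite_pre by (intro exI[of _ x]) simp
qed

lemma subshift_prefix_approx:
  assumes nonempty: "\<forall>a. \<tau> a \<noteq> []" and fixpoint: "subst_seq \<tau> u = u" and y: "y \<in> subshift u"
  shows "\<exists>p t. t < length (\<tau> (u p)) \<and> (\<forall>i<M. subst_seq \<tau> (shift p u) (t + i) = y i)"
proof -
  obtain n where n: "\<forall>i<M. u (n + i) = y i" using y unfolding subshift_def by blast
  obtain p t where pt: "n = block_start \<tau> u p + t" and t: "t < length (\<tau> (u p))"
    using block_start_decomp[OF nonempty] by blast
  have "subst_seq \<tau> (shift p u) (t + i) = y i" if "i < M" for i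
  proof -
    have "subst_seq \<tau> (shift p u) (t + i) = subst_seq \<tau> u (n + i)"
      using subst_seq_shift[OF nonempty, of p u "t + i"] pt by (simp add: add.assoc)
    then show ?thesis using fixpoint n that by simp
  qed
  then show ?thesis using t by blast
qed

lemma subshift_subst_cover:
  fixes \<tau> :: "'a::finite \<Rightarrow> 'a list"
  assumes nonempty: "\<forall>a. \<tau> a \<noteq> []" and fixpoint: "subst_seq \<tau> u = u" and y: "y \<in> subshift u"
  shows "\<exists>x k. x \<in> subshift u \<and> k < length (\<tau> (x 0)) \<and> y = shift k (subst_seq \<tau> x)"
proof -
  obtain p t where "\<forall>M. t M < length (\<tau> (u (p M))) \<and>
      (\<forall>i<M. subst_seq \<tau> (shift (p M) u) (t M + i) = y i)"
    using subshift_prefix_approx[OF assms] by (metis (lifting))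
  then have t_bound: "t M < length (\<tau> (u (p M)))"
    and approx: "i < M \<Longrightarrow> subst_seq \<tau> (shift (p M) u) (t M + i) = y i" for M i
    by simp_all
  have "range t \<subseteq> (\<Union>a. {..<length (\<tau> a)})" by (auto intro: t_bound)
  then have "finite (range t)" by (rule finite_subset) simp
  then obtain k where k: "infinite (t -` {k})"
    using inf_img_fin_dom[OF _ infinite_UNIV_nat] by blast
  obtain x where x: "\<forall>N. infinite {M \<in> t -` {k}. \<forall>i<N. shift (p M) u i = x i}"
    using finite_alphabet_limit[OF k, of "\<lambda>M. shift (p M) u"] by blast
  have close: "\<exists>M\<ge>B. t M = k \<and> (\<forall>i<N. shift (p M) u i = x i)" for B N
    using x[rule_format, of N] unfolding infinite_nat_iff_unbounded_le by auto
  have "x \<in> subshift u"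
  proof (rule subshift_closed, intro allI)
    fix N
    obtain M where "\<forall>i<N. shift (p M) u i = x i" using close[of 0 N] by blast
    then show "\<exists>z\<in>subshift u. \<forall>i<N. z i = x i" using shift_in_subshift by blast
  qed
  moreover have "k < length (\<tau> (x 0))"
  proof -
    obtain M where "t M = k" and "shift (p M) u 0 = x 0" using close[of 0 1] by auto
    then show ?thesis using t_bound[of M] by (simp add: shift_def)
  qed
  moreover have "y = shift k (subst_seq \<tau> x)"
  proof
    fix m
    obtain M where M: "Suc m \<le> M" "t M = k" "\<forall>i<Suc (m + k). shift (p M) u i = x i"
      using close by blast
    have "subst_seq \<tau> x (m + k) = subst_seq \<tau> (shift (p M) u) (k + m)"
      using subst_seq_cong[OF nonempty M(3)] by (simp add: add.commute)
    also have "\<dots> = y m" using approx[of m M] M by simp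
    finally show "y m = shift k (subst_seq \<tau> x) m" by (simp add: shift_def)
  qed
  ultimately show ?thesis by blast
qed

locale recognizable_fixpoint =
  fixes \<tau> :: "'a \<Rightarrow> 'a list" and u :: "nat \<Rightarrow> 'a" and L :: nat
  assumes nonempty: "\<forall>a. \<tau> a \<noteq> []"
    and fixpoint: "subst_seq \<tau> u = u"
    and recognizing: "\<And>i j. \<forall>t<L. u (i + t) = u (j + t) \<Longrightarrow> i \<in> range (block_start \<tau> u)
      \<Longrightarrow> j \<in> range (block_start \<tau> u)"
    and inj_subst: "inj \<tau>"
begin

definition recognized_cut :: "(nat \<Rightarrow> 'a) \<Rightarrow> nat \<Rightarrow> bool" where
  "recognized_cut y m \<longleftrightarrow> (\<exists>n\<in>range (block_start \<tau> u). \<forall>t<L. u (n + t) = y (m + t))"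

lemma recognized_cut_iff:
  assumes "\<forall>t<L. u (n + t) = y (m + t)"
  shows "recognized_cut y m \<longleftrightarrow> n \<in> range (block_start \<tau> u)"
proof
  assume "recognized_cut y m"
  then obtain n' where "n' \<in> range (block_start \<tau> u)" and "\<forall>t<L. u (n' + t) = y (m + t)"
    unfolding recognized_cut_def by blast
  then show "n \<in> range (block_start \<tau> u)"
    using assms recognizing[of n' n] by simp
qed (use assms in \<open>auto simp: recognized_cut_def\<close>)

lemma recognized_cut_iff_cut:
  assumes x: "x \<in> subshift u"
  shows "recognized_cut (shift k (subst_seq \<tau> x)) m \<longleftrightarrow> m + k \<in> range (block_start \<tau> x)"
proof -
  define N where "N = m + k + L"
  obtain p where p: "\<forall>i<N. u (p + i) = x i" using x unfolding subshift_def by blast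
  then have agree: "\<forall>i<N. shift p u i = x i" by (simp add: shift_def add.commute)
  have "u (block_start \<tau> u p + (m + k) + t) = shift k (subst_seq \<tau> x) (m + t)" if "t < L" for t
  proof -
    have "u (block_start \<tau> u p + (m + k + t)) = subst_seq \<tau> (shift p u) (m + k + t)"
      using subst_seq_shift[OF nonempty, of p u] fixpoint by simp
    also have "\<dots> = subst_seq \<tau> x (m + k + t)"
      using subst_seq_cong[OF nonempty agree] that by (simp add: N_def)
    finally show ?thesis by (simp add: shift_def ac_simps)
  qed
  then have "recognized_cut (shift k (subst_seq \<tau> x)) m
      \<longleftrightarrow> block_start \<tau> u p + (m + k) \<in> range (block_start \<tau> u)"
    by (intro recognized_cut_iff) simp
  also have "\<dots> \<longleftrightarrow> m + k \<in> range (block_start \<tau> (shift p u))"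
    by (rule block_start_shift_range_iff[OF nonempty])
  also have "\<dots> \<longleftrightarrow> m + k \<in> range (block_start \<tau> x)"
    using block_start_range_cong[OF nonempty agree] by (simp add: N_def)
  finally show ?thesis .
qed

lemma inj_on_subst_seq: "inj_on (subst_seq \<tau>) (subshift u)"
proof (rule inj_onI)
  fix x x' assume x: "x \<in> subshift u" and x': "x' \<in> subshift u"
    and eq: "subst_seq \<tau> x = subst_seq \<tau> x'"
  have "{m. m + 0 \<in> range (block_start \<tau> x)} = {m. m + 0 \<in> range (block_start \<tau> x')}"
    using recognized_cut_iff_cut[OF x, of 0] recognized_cut_iff_cut[OF x', of 0] eq by auto
  then show "x = x'"
    using blocks_eq_of_cuts_eq[OF nonempty inj_subst, of 0 x 0 x' 0] eq by auto
qed

lemma shift_eq_of_shifted_subst_eq: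
  assumes x: "x \<in> subshift u" and k: "0 < k" "k < length (\<tau> (x 0))"
    and x': "x' \<in> subshift u" and k': "0 < k'" "k' < length (\<tau> (x' 0))"
    and eq: "shift k (subst_seq \<tau> x) = shift k' (subst_seq \<tau> x')"
  shows "shift 1 x = shift 1 x'"
proof
  fix i
  have "{m. m + k \<in> range (block_start \<tau> x)} = {m. m + k' \<in> range (block_start \<tau> x')}"
    using recognized_cut_iff_cut[OF x, of k] recognized_cut_iff_cut[OF x', of k'] eq by auto
  then have "x (1 + i) = x' (1 + i)"
    using blocks_eq_of_cuts_eq[OF nonempty inj_subst eq, of 1 i] k k' by (simp add: block_start_Suc)
  then show "shift 1 x i = shift 1 x' i" by (simp add: shift_def add.commute)
qed

end

theorem corollary3:
  fixes \<tau> :: "'a::finite \<Rightarrow> 'a list" and u :: "nat \<Rightarrow> 'a"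
  assumes nonempty: "\<forall>a. \<tau> a \<noteq> []"
    and prim: "primitive \<tau>"
    and aper: "infinite (subshift u)"
    and fixpt: "subst_seq \<tau> u = u"
    and recog: "recognizable \<tau> u"
    and inj_pow: "\<forall>n\<ge>1. inj (\<lambda>a. (subst_word \<tau> ^^ n) [a])"
  shows "(\<forall>y \<in> subst_seq \<tau> ` subshift u. \<exists>!x. x \<in> subshift u \<and> y = subst_seq \<tau> x)
    \<and> (\<forall>y \<in> subshift u - subst_seq \<tau> ` subshift u.
         (\<exists>x k. x \<in> subshift u \<and> 0 < k \<and> k < length (\<tau> (x 0)) \<and> y = shift k (subst_seq \<tau> x))
         \<and> (\<forall>x k x' k'. x \<in> subshift u \<and> 0 < k \<and> k < length (\<tau> (x 0)) \<and> y = shift k (subst_seq \<tau> x)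
              \<and> x' \<in> subshift u \<and> 0 < k' \<and> k' < length (\<tau> (x' 0)) \<and> y = shift k' (subst_seq \<tau> x')
              \<longrightarrow> shift 1 x = shift 1 x'))"
proof -
  (* Primitivity and aperiodicity only serve to make \<tau> recognizable, which is assumed here;
     of inj_pow only the case n = 1 is used. *)
  obtain L where "\<forall>i j. (\<forall>t<L. u (i + t) = u (j + t)) \<and> i \<in> range (block_start \<tau> u)
      \<longrightarrow> j \<in> range (block_start \<tau> u)"
    using recog unfolding recognizable_def recog_set_eq_range by blast
  moreover have "inj \<tau>"
    using inj_pow[rule_format, of 1] by (simp add: subst_word_def)
  ultimately interpret recognizable_fixpoint \<tau> u L
    using nonempty fixpt by unfold_locales blast+
  show ?thesis
  proof (intro conjI ballI allI impI)
    fix y assume "y \<in> subst_seq \<tau> ` subshift u"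
    then show "\<exists>!x. x \<in> subshift u \<and> y = subst_seq \<tau> x"
      using inj_on_subst_seq by (auto dest: inj_onD)
  next
    fix y assume y: "y \<in> subshift u - subst_seq \<tau> ` subshift u"
    then obtain x k where "x \<in> subshift u" "k < length (\<tau> (x 0))" "y = shift k (subst_seq \<tau> x)"
      using subshift_subst_cover[OF nonempty fixpt] by blast
    moreover have "k \<noteq> 0" using y calculation by auto
    ultimately show "\<exists>x k. x \<in> subshift u \<and> 0 < k \<and> k < length (\<tau> (x 0)) \<and> y = shift k (subst_seq \<tau> x)"
      by blast
  qed (use shift_eq_of_shifted_subst_eq in blast)
qed

end
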